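(* (Furstenberg–Katznelson theorem for located words.) Let $A,B$ be finite disjoint sets and $x\notin A\cup B$ a variable. Let $F$ be a finite set of reduced strings in $A$. For every coloring of $\langle(X_n(A\cup B))\rangle$ with finitely many colors, there exists a basic sequence $(w_i)$ in $\langle(X_n(B))\rangle$ such that $x$ occurs in each $w_i$ and, for all $n_0<\cdots<n_k$ and $c_0,\dots,c_k\in A\cup B$, the color of $w_{n_0}[c_0]\cdots w_{n_k}[c_k]$ depends only on $\overline{c_0\cdots c_k}$, provided $\overline{c_0\cdots c_k}\in F$.
   Context: For a set $C$ with $x\notin C$, $X_n(C)=\{n\}\times(C\cup\{x\})$. For a sequence of sets $(X_n)$, $\langle(X_n)\rangle$ is the set of finite sequences $y_1\cdots y_k$ for which there are $m_1<\cdots<m_k$ with $y_i\in X_{m_i}$ (located words); it is a partial semigroup: the product of $y_1\cdots y_k$ and $z_1\cdots z_l$ is defined iff there are $m_1<\cdots<m_k<p_1<\cdots<p_l$ with $y_i\in X_{m_i}$, $z_j\in X_{p_j}$, and then it is the concatenation. Note $\langle(X_n(B))\rangle\subseteq\langle(X_n(A\cup B))\rangle$. A sequence $(w_i)$ is basic in $\langle(X_n(B))\rangle$ if $w_{i_1}\cdots w_{i_k}$ is defined for all $i_1<\cdots<i_k$. "$x$ occurs in $w$" means some entry of $w$ is of the form $(m,x)$; for such $w$ and $c\in A\cup B\cup\{x\}$, $w[c]$ is obtained by replacing every entry $(m,x)$ by $(m,c)$. A reduced string in $A$ is a (possibly empty) sequence $a_0\cdots a_k$ of elements of $A$ with $a_i\neq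 a_{i+1}$ for all $i<k$. For a sequence $c_0\cdots c_k$ of elements of $A\cup B$, $\overline{c_0\cdots c_k}$ is the reduced string obtained by deleting all entries in $B$ and then replacing each maximal run of a repeated element of $A$ by a single occurrence of it. *)

theory Defs
  imports Main
begin

definition Xn :: "'a set \<Rightarrow> 'a \<Rightarrow> nat \<Rightarrow> (nat \<times> 'a) set" where
  "Xn C x n = {n} \<times> (C \<union> {x})"

definition located_words :: "'a set \<Rightarrow> 'a \<Rightarrow> (nat \<times> 'a) list set" where
  "located_words C x = {ys. ys \<noteq> [] \<and> (\<exists>ms. length ms = length ys \<and> sorted_wrt (<) ms \<and>
       (\<forall>i < length ys. ys ! i \<in> Xn C x (ms ! i)))}"

text \<open>A sequence (w_i) is basic in <(X_n(C))>: each w_i lies there and every product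
  w_{i_1} ... w_{i_k} (i_1 < ... < i_k) is defined, i.e. the concatenation is again located.\<close>
definition basic_seq :: "'a set \<Rightarrow> 'a \<Rightarrow> (nat \<Rightarrow> (nat \<times> 'a) list) \<Rightarrow> bool" where
  "basic_seq C x w \<longleftrightarrow> (\<forall>i. w i \<in> located_words C x) \<and>
     (\<forall>is. is \<noteq> [] \<longrightarrow> sorted_wrt (<) is \<longrightarrow> concat (map w is) \<in> located_words C x)"

definition occurs :: "'a \<Rightarrow> (nat \<times> 'a) list \<Rightarrow> bool" where
  "occurs x w \<longleftrightarrow> (\<exists>m. (m, x) \<in> set w)"

definition subst :: "'a \<Rightarrow> (nat \<times> 'a) list \<Rightarrow> 'a \<Rightarrow> (nat \<times> 'a) list" where
  "subst x w c = map (\<lambda>(m, d). if d = x then (m, c) else (m, d)) w"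

definition reduced_string :: "'a set \<Rightarrow> 'a list \<Rightarrow> bool" where
  "reduced_string A s \<longleftrightarrow> set s \<subseteq> A \<and> (\<forall>i. Suc i < length s \<longrightarrow> s ! i \<noteq> s ! Suc i)"

definition reduce :: "'a set \<Rightarrow> 'a list \<Rightarrow> 'a list" where
  "reduce B cs = remdups_adj (filter (\<lambda>c. c \<notin> B) cs)"

definition subst_prod :: "'a \<Rightarrow> (nat \<Rightarrow> (nat \<times> 'a) list) \<Rightarrow> nat list \<Rightarrow> 'a list \<Rightarrow> (nat \<times> 'a) list" where
  "subst_prod x w ns cs = concat (map2 (\<lambda>n c. subst x (w n) c) ns cs)"

end

(*
  Ultrafilters on words form a compact right topological semigroup under the extension of
  concatenation, so the Ellis-Numakura lemma provides idempotents. Take p minimal among the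
  idempotents living on words without the variable x, and q a minimal idempotent below p
  among the ultrafilters on located words over B that live at arbitrarily late positions.
  Then q lives on words containing x, and q[b] = p for b in B, so that q[c_1] \<odot> ... \<odot> q[c_k]
  only depends on the reduced string of c_1 ... c_k; each such product contains exactly one
  colour class. The words w_0, w_1, ... are chosen one after another, each from a q-large
  set, keeping every product of chosen words inside the colour class prescribed by its
  reduced string, together with almost all of its continuations.
*)
theory Submission
  imports Defs "HOL-Library.Sublist"
begin

section \<open>Ultrafilters\<close>

definition ultrafilter :: "'b set set \<Rightarrow> bool" where
  "ultrafilter U \<longleftrightarrow> UNIV \<in> U \<and> {} \<notin> U \<and> (\<forall>E F. E \<in> U \<longrightarrow> E \<subseteq> F \<longrightarrow> F \<in> U) \<and>
    (\<forall>E F. E \<in> U \<longrightarrow> F \<in> U \<longrightarrow> E \<inter> F \<in> U) \<and> (\<forall>E. E \<in> U \<or> - E \<in> U)"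

lemma ultrafilter_UNIV: "ultrafilter U \<Longrightarrow> UNIV \<in> U"
  unfolding ultrafilter_def by blast

lemma ultrafilter_empty: "ultrafilter U \<Longrightarrow> {} \<notin> U"
  unfolding ultrafilter_def by blast

lemma ultrafilter_mono: "ultrafilter U \<Longrightarrow> E \<in> U \<Longrightarrow> E \<subseteq> F \<Longrightarrow> F \<in> U"
  unfolding ultrafilter_def by blast

lemma ultrafilter_Int: "ultrafilter U \<Longrightarrow> E \<in> U \<Longrightarrow> F \<in> U \<Longrightarrow> E \<inter> F \<in> U"
  unfolding ultrafilter_def by blast

lemma ultrafilter_Int_iff: "ultrafilter U \<Longrightarrow> E \<inter> F \<in> U \<longleftrightarrow> E \<in> U \<and> F \<in> U"
  by (meson inf_le1 inf_le2 ultrafilter_Int ultrafilter_mono)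

lemma ultrafilter_Compl_iff:
  assumes U: "ultrafilter U"
  shows "- E \<in> U \<longleftrightarrow> E \<notin> U"
proof
  assume "- E \<in> U"
  then show "E \<notin> U" using ultrafilter_Int[OF U, of E "- E"] ultrafilter_empty[OF U] by auto
next
  assume "E \<notin> U"
  then show "- E \<in> U" using U unfolding ultrafilter_def by blast
qed

lemma ultrafilter_INT:
  assumes "ultrafilter U" "finite I" "\<And>i. i \<in> I \<Longrightarrow> X i \<in> U"
  shows "(\<Inter>i\<in>I. X i) \<in> U"
  using assms(2,3) by (induction I rule: finite_induct)
    (simp_all add: ultrafilter_UNIV[OF assms(1)] ultrafilter_Int[OF assms(1)])

lemma ultrafilter_Inter: "ultrafilter U \<Longrightarrow> finite G \<Longrightarrow> G \<subseteq> U \<Longrightarrow> \<Inter>G \<in> U"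
  using ultrafilter_INT[of U G id] by auto

lemma ultrafilter_UN_finite:
  assumes U: "ultrafilter U" and "finite I" "(\<Union>i\<in>I. X i) \<in> U"
  shows "\<exists>i\<in>I. X i \<in> U"
proof (rule ccontr)
  assume "\<not> (\<exists>i\<in>I. X i \<in> U)"
  then have "\<forall>i\<in>I. - X i \<in> U" using ultrafilter_Compl_iff[OF U] by blast
  then have "(\<Inter>i\<in>I. - X i) \<in> U" using ultrafilter_INT[OF U \<open>finite I\<close>, of "\<lambda>i. - X i"] by blast
  then have "(\<Union>i\<in>I. X i) \<inter> (\<Inter>i\<in>I. - X i) \<in> U" using assms(3) ultrafilter_Int[OF U] by blast
  moreover have "(\<Union>i\<in>I. X i) \<inter> (\<Inter>i\<in>I. - X i) = {}" by blast
  ultimately show False using ultrafilter_empty[OF U] by simp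
qed

lemma ultrafilter_subset_eq:
  assumes "ultrafilter U" "ultrafilter V" "U \<subseteq> V"
  shows "U = V"
proof (intro subset_antisym subsetI)
  fix E assume "E \<in> V"
  then have "- E \<notin> U" using assms ultrafilter_Compl_iff by blast
  then show "E \<in> U" using ultrafilter_Compl_iff[OF assms(1)] by blast
qed (use assms in blast)

definition principal_ultra :: "'b \<Rightarrow> 'b set set" where
  "principal_ultra a = {E. a \<in> E}"

definition fip :: "'b set set \<Rightarrow> bool" where
  "fip G \<longleftrightarrow> (\<forall>H. finite H \<longrightarrow> H \<subseteq> G \<longrightarrow> \<Inter>H \<noteq> {})"

lemma maximal_fip_ultrafilter:
  assumes fip: "fip M" and max: "\<And>E. fip (insert E M) \<Longrightarrow> E \<in> M"
  shows "ultrafilter M"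
proof -
  have meets: "\<Inter>H \<noteq> {}" if "finite H" "H \<subseteq> M" for H
    using fip that unfolding fip_def by blast
  have member: "E \<in> M" if "\<And>H. finite H \<Longrightarrow> H \<subseteq> M \<Longrightarrow> \<Inter>H \<inter> E \<noteq> {}" for E
  proof (rule max, unfold fip_def, intro allI impI)
    fix H assume "finite H" "H \<subseteq> insert E M"
    then have "\<Inter>(H - {E}) \<inter> E \<noteq> {}" using that[of "H - {E}"] by blast
    then show "\<Inter>H \<noteq> {}" by blast
  qed
  show ?thesis unfolding ultrafilter_def
  proof (intro conjI allI impI)
    show "UNIV \<in> M" by (rule member) (use meets in auto)
    show "{} \<notin> M" using meets[of "{{}}"] by auto
  next
    fix E F assume "E \<in> M" "E \<subseteq> F"
    show "F \<in> M"
    proof (rule member)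
      fix H assume "finite H" "H \<subseteq> M"
      then have "\<Inter>(insert E H) \<noteq> {}" using meets[of "insert E H"] \<open>E \<in> M\<close> by simp
      then show "\<Inter>H \<inter> F \<noteq> {}" using \<open>E \<subseteq> F\<close> by blast
    qed
  next
    fix E F assume "E \<in> M" "F \<in> M"
    show "E \<inter> F \<in> M"
    proof (rule member)
      fix H assume "finite H" "H \<subseteq> M"
      then have "\<Inter>(insert E (insert F H)) \<noteq> {}"
        using meets[of "insert E (insert F H)"] \<open>E \<in> M\<close> \<open>F \<in> M\<close> by simp
      then show "\<Inter>H \<inter> (E \<inter> F) \<noteq> {}" by blast
    qed
  next
    fix E
    show "E \<in> M \<or> - E \<in> M"
    proof (rule ccontr)
      assume "\<not> (E \<in> M \<or> - E \<in> M)"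
      then have "E \<notin> M" "- E \<notin> M" by simp_all
      obtain H1 where "finite H1" "H1 \<subseteq> M" "\<Inter>H1 \<inter> E = {}"
        using member[of E] \<open>E \<notin> M\<close> by metis
      moreover obtain H2 where "finite H2" "H2 \<subseteq> M" "\<Inter>H2 \<inter> - E = {}"
        using member[of "- E"] \<open>- E \<notin> M\<close> by metis
      moreover have "\<Inter>(H1 \<union> H2) = {}" using calculation by blast
      ultimately show False using meets[of "H1 \<union> H2"] by simp
    qed
  qed
qed

lemma ultrafilter_exists:
  assumes "fip \<F>"
  shows "\<exists>U. ultrafilter U \<and> \<F> \<subseteq> U"
proof -
  let ?A = "{G. \<F> \<subseteq> G \<and> fip G}"
  have "\<exists>M\<in>?A. \<forall>X\<in>?A. M \<subseteq> X \<longrightarrow> X = M"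
  proof (rule subset_Zorn_nonempty)
    show "?A \<noteq> {}" using assms by auto
    fix C assume C: "C \<noteq> {}" "subset.chain ?A C"
    have "fip (\<Union>C)" unfolding fip_def
    proof (intro allI impI)
      fix H assume H: "finite H" "H \<subseteq> \<Union>C"
      then obtain G where "G \<in> C" "H \<subseteq> G"
        using C finite_subset_Union_chain by metis
      then show "\<Inter>H \<noteq> {}" using C(2) H(1) unfolding subset_chain_def fip_def by blast
    qed
    then show "\<Union>C \<in> ?A" using C unfolding subset_chain_def by blast
  qed
  then obtain M where M: "\<F> \<subseteq> M" "fip M" "\<And>X. \<F> \<subseteq> X \<Longrightarrow> fip X \<Longrightarrow> M \<subseteq> X \<Longrightarrow> X = M"
    by auto
  have "ultrafilter M"
    by (rule maximal_fip_ultrafilter[OF M(2)]) (use M in blast)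
  then show ?thesis using M(1) by blast
qed

section \<open>Closed sets of ultrafilters\<close>

text \<open>Closedness in the Stone topology: an ultrafilter all of whose members meet \<open>K\<close>
  belongs to \<open>K\<close>.\<close>
definition ultra_closed :: "'b set set set \<Rightarrow> bool" where
  "ultra_closed K \<longleftrightarrow> (\<forall>U\<in>K. ultrafilter U) \<and>
     (\<forall>U. ultrafilter U \<longrightarrow> (\<forall>E\<in>U. \<exists>V\<in>K. E \<in> V) \<longrightarrow> U \<in> K)"

lemma ultra_closed_ultrafilter: "ultra_closed K \<Longrightarrow> U \<in> K \<Longrightarrow> ultrafilter U"
  unfolding ultra_closed_def by blast

lemma ultra_closedI:
  assumes "\<And>U. U \<in> K \<Longrightarrow> ultrafilter U"
    and "\<And>U. ultrafilter U \<Longrightarrow> (\<And>E. E \<in> U \<Longrightarrow> \<exists>V\<in>K. E \<in> V) \<Longrightarrow> U \<in> K"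
  shows "ultra_closed K"
  using assms unfolding ultra_closed_def by blast

lemma ultra_closed_member:
  "ultra_closed K \<Longrightarrow> ultrafilter U \<Longrightarrow> (\<And>E. E \<in> U \<Longrightarrow> \<exists>V\<in>K. E \<in> V) \<Longrightarrow> U \<in> K"
  unfolding ultra_closed_def by blast

lemma ultra_closed_basic: "ultra_closed {U. ultrafilter U \<and> E \<in> U}"
  by (rule ultra_closedI) (auto dest: ultrafilter_Compl_iff)

lemma ultra_closed_Inter:
  "\<K> \<noteq> {} \<Longrightarrow> (\<And>K. K \<in> \<K> \<Longrightarrow> ultra_closed K) \<Longrightarrow> ultra_closed (\<Inter>\<K>)"
  unfolding ultra_closed_def by (metis InterE InterI all_not_in_conv)

lemma ultra_closed_Int: "ultra_closed K \<Longrightarrow> ultra_closed L \<Longrightarrow> ultra_closed (K \<inter> L)"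
  using ultra_closed_Inter[of "{K, L}"] by auto

lemma ultra_closed_common_point:
  assumes closed: "\<And>K. K \<in> \<K> \<Longrightarrow> ultra_closed K"
    and finite_meet: "\<And>\<K>0. finite \<K>0 \<Longrightarrow> \<K>0 \<subseteq> \<K> \<Longrightarrow> \<exists>U. ultrafilter U \<and> (\<forall>K\<in>\<K>0. U \<in> K)"
  shows "\<exists>U. ultrafilter U \<and> (\<forall>K\<in>\<K>. U \<in> K)"
proof -
  define \<F> where "\<F> = {E. \<exists>\<K>0. finite \<K>0 \<and> \<K>0 \<subseteq> \<K> \<and>
    (\<forall>V. ultrafilter V \<and> (\<forall>K\<in>\<K>0. V \<in> K) \<longrightarrow> E \<in> V)}"
  have "fip \<F>" unfolding fip_def
  proof (intro allI impI)
    fix H assume H: "finite H" "H \<subseteq> \<F>"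
    then have "\<forall>E\<in>H. \<exists>\<K>0. finite \<K>0 \<and> \<K>0 \<subseteq> \<K> \<and>
      (\<forall>V. ultrafilter V \<and> (\<forall>K\<in>\<K>0. V \<in> K) \<longrightarrow> E \<in> V)"
      unfolding \<F>_def by blast
    then obtain g where g: "\<forall>E\<in>H. finite (g E) \<and> g E \<subseteq> \<K> \<and>
      (\<forall>V. ultrafilter V \<and> (\<forall>K\<in>g E. V \<in> K) \<longrightarrow> E \<in> V)"
      by metis
    have "finite (\<Union>(g ` H))" "\<Union>(g ` H) \<subseteq> \<K>" using g H(1) by auto
    then obtain V where V: "ultrafilter V" "\<forall>K\<in>\<Union>(g ` H). V \<in> K" using finite_meet by blast
    have "H \<subseteq> V" using g V by blast
    then have "\<Inter>H \<in> V" using ultrafilter_Inter[OF V(1) H(1)] by blast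
    then show "\<Inter>H \<noteq> {}" using ultrafilter_empty[OF V(1)] by auto
  qed
  then obtain U where U: "ultrafilter U" "\<F> \<subseteq> U" using ultrafilter_exists by blast
  have "U \<in> K" if K: "K \<in> \<K>" for K
  proof (rule ultra_closed_member[OF closed[OF K] U(1)], rule ccontr)
    fix E assume E: "E \<in> U" "\<not> (\<exists>V\<in>K. E \<in> V)"
    have "- E \<in> V" if "ultrafilter V" "V \<in> K" for V
      using that E(2) ultrafilter_Compl_iff by blast
    then have "- E \<in> \<F>" unfolding \<F>_def using K by (intro CollectI exI[of _ "{K}"]) auto
    then have "- E \<in> U" using U(2) by blast
    then show False using E(1) ultrafilter_Compl_iff[OF U(1)] by blast
  qed
  then show ?thesis using U(1) by blast
qed

lemma ultra_closed_chain_Inter_nonempty: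
  assumes "\<C> \<noteq> {}" and chain: "\<forall>X\<in>\<C>. \<forall>Y\<in>\<C>. X \<subseteq> Y \<or> Y \<subseteq> X"
    and closed: "\<And>K. K \<in> \<C> \<Longrightarrow> ultra_closed K \<and> K \<noteq> {}"
  shows "\<Inter>\<C> \<noteq> {}"
proof -
  have "\<exists>U. ultrafilter U \<and> (\<forall>K\<in>\<K>0. U \<in> K)" if \<K>0: "finite \<K>0" "\<K>0 \<subseteq> \<C>" for \<K>0
  proof -
    have "\<exists>K\<in>\<C>. \<forall>K'\<in>\<K>0. K \<subseteq> K'"
    proof (cases "\<K>0 = {}")
      case True then show ?thesis using \<open>\<C> \<noteq> {}\<close> by auto
    next
      case False
      have "subset.chain \<C> \<K>0" using \<K>0(2) chain unfolding subset_chain_def by blast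
      then have "\<Inter>\<K>0 \<in> \<K>0" by (rule Inter_in_chain[OF \<K>0(1) False])
      then show ?thesis using \<K>0(2) by blast
    qed
    then obtain K where K: "K \<in> \<C>" "\<forall>K'\<in>\<K>0. K \<subseteq> K'" by blast
    then obtain U where "U \<in> K" using closed by blast
    then show ?thesis using K closed[OF K(1)] ultra_closed_ultrafilter by blast
  qed
  then obtain U where "ultrafilter U" "\<forall>K\<in>\<C>. U \<in> K"
    using ultra_closed_common_point[OF conjunct1[OF closed]] by blast
  then show ?thesis by blast
qed

lemma minimal_ultra_closed:
  assumes K: "ultra_closed K" "K \<noteq> {}" "\<Phi> K"
    and \<Phi>_Inter: "\<And>\<C>. \<C> \<noteq> {} \<Longrightarrow> (\<And>L. L \<in> \<C> \<Longrightarrow> \<Phi> L) \<Longrightarrow> \<Phi> (\<Inter>\<C>)"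
  obtains L where "L \<subseteq> K" "ultra_closed L" "L \<noteq> {}" "\<Phi> L"
    "\<And>L'. L' \<subseteq> L \<Longrightarrow> ultra_closed L' \<Longrightarrow> L' \<noteq> {} \<Longrightarrow> \<Phi> L' \<Longrightarrow> L' = L"
proof -
  let ?A = "{L. L \<subseteq> K \<and> ultra_closed L \<and> L \<noteq> {} \<and> \<Phi> L}"
  have "\<exists>M\<in>?A. \<forall>L\<in>?A. L \<subseteq> M \<longrightarrow> L = M"
  proof (rule predicate_Zorn)
    show "partial_order_on ?A (relation_of (\<lambda>X Y. Y \<subseteq> X) ?A)"
      unfolding partial_order_on_def preorder_on_def refl_on_def trans_def antisym_def
        relation_of_def by auto
    fix \<C> assume "\<C> \<in> Chains (relation_of (\<lambda>X Y. Y \<subseteq> X) ?A)"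
    then have \<C>: "\<C> \<subseteq> ?A" "\<forall>X\<in>\<C>. \<forall>Y\<in>\<C>. X \<subseteq> Y \<or> Y \<subseteq> X"
      unfolding Chains_def relation_of_def by auto
    show "\<exists>M\<in>?A. \<forall>L\<in>\<C>. M \<subseteq> L"
    proof (cases "\<C> = {}")
      case True
      have "K \<in> ?A" using K by blast
      then show ?thesis using True by blast
    next
      case False
      have "\<Inter>\<C> \<noteq> {}"
        by (rule ultra_closed_chain_Inter_nonempty[OF False \<C>(2)]) (use \<C>(1) in blast)
      moreover have "ultra_closed (\<Inter>\<C>)"
        by (rule ultra_closed_Inter[OF False]) (use \<C>(1) in blast)
      moreover have "\<Phi> (\<Inter>\<C>)"
        by (rule \<Phi>_Inter[OF False]) (use \<C>(1) in blast)
      moreover have "\<Inter>\<C> \<subseteq> K" using \<C>(1) False by blast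
      ultimately have "\<Inter>\<C> \<in> ?A" by blast
      then show ?thesis by blast
    qed
  qed
  then obtain L where L: "L \<in> ?A" and min: "\<forall>L'\<in>?A. L' \<subseteq> L \<longrightarrow> L' = L" by (rule bexE)
  show ?thesis
  proof (rule that)
    fix L' assume "L' \<subseteq> L" "ultra_closed L'" "L' \<noteq> {}" "\<Phi> L'"
    then show "L' = L" using L min by blast
  qed (use L in simp_all)
qed

section \<open>The semigroup of ultrafilters on words\<close>

definition prefix_set :: "'b list set set \<Rightarrow> 'b list set \<Rightarrow> 'b list set" where
  "prefix_set Q E = {u. {v. u @ v \<in> E} \<in> Q}"

definition umult :: "'b list set set \<Rightarrow> 'b list set set \<Rightarrow> 'b list set set" (infixl \<open>\<odot>\<close> 70)
  where "P \<odot> Q = {E. prefix_set Q E \<in> P}"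

lemma mem_umult_iff: "E \<in> P \<odot> Q \<longleftrightarrow> prefix_set Q E \<in> P"
  by (simp add: umult_def)

lemma umult_assoc: "P \<odot> Q \<odot> R = P \<odot> (Q \<odot> R)"
  by (simp add: umult_def prefix_set_def)

lemma umult_principal_ultra_Nil_right: "P \<odot> principal_ultra [] = P"
  by (simp add: umult_def prefix_set_def principal_ultra_def)

lemma umult_principal_ultra_Nil_left: "principal_ultra [] \<odot> P = P"
  by (simp add: umult_def prefix_set_def principal_ultra_def)

lemma prefix_set_Int: "ultrafilter Q \<Longrightarrow> prefix_set Q (E \<inter> F) = prefix_set Q E \<inter> prefix_set Q F"
  unfolding prefix_set_def using ultrafilter_Int_iff[of Q] by (auto simp: Collect_conj_eq)

lemma prefix_set_mono: "ultrafilter Q \<Longrightarrow> E \<subseteq> F \<Longrightarrow> prefix_set Q E \<subseteq> prefix_set Q F"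
  unfolding prefix_set_def by (auto elim: ultrafilter_mono)

lemma prefix_set_UNIV: "ultrafilter Q \<Longrightarrow> prefix_set Q UNIV = UNIV"
  unfolding prefix_set_def by (simp add: ultrafilter_UNIV)

lemma prefix_set_empty: "ultrafilter Q \<Longrightarrow> prefix_set Q {} = {}"
  unfolding prefix_set_def by (simp add: ultrafilter_empty)

lemma prefix_set_Compl: "ultrafilter Q \<Longrightarrow> prefix_set Q (- E) = - prefix_set Q E"
  unfolding prefix_set_def using ultrafilter_Compl_iff[of Q] by (auto simp: Collect_neg_eq)

lemma ultrafilter_umult:
  assumes P: "ultrafilter P" and Q: "ultrafilter Q"
  shows "ultrafilter (P \<odot> Q)"
  unfolding ultrafilter_def mem_umult_iff
proof (intro conjI allI impI)
  show "prefix_set Q UNIV \<in> P" "prefix_set Q {} \<notin> P"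
    by (simp_all add: prefix_set_UNIV[OF Q] prefix_set_empty[OF Q] ultrafilter_UNIV[OF P]
        ultrafilter_empty[OF P])
  fix E F
  show "prefix_set Q F \<in> P" if "prefix_set Q E \<in> P" "E \<subseteq> F"
    using that ultrafilter_mono[OF P] prefix_set_mono[OF Q] by metis
  show "prefix_set Q (E \<inter> F) \<in> P" if "prefix_set Q E \<in> P" "prefix_set Q F \<in> P"
    using that by (simp add: prefix_set_Int[OF Q] ultrafilter_Int[OF P])
next
  fix E
  show "prefix_set Q E \<in> P \<or> prefix_set Q (- E) \<in> P"
    by (simp add: prefix_set_Compl[OF Q] ultrafilter_Compl_iff[OF P])
qed

text \<open>Right multiplication is continuous, so by compactness it maps closed sets to closed sets.\<close>
lemma ultra_closed_umult_right:
  assumes K: "ultra_closed K" and R: "ultrafilter R"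
  shows "ultra_closed ((\<lambda>S. S \<odot> R) ` K)"
proof (rule ultra_closedI)
  fix U assume "U \<in> (\<lambda>S. S \<odot> R) ` K"
  then show "ultrafilter U" using K R ultrafilter_umult ultra_closed_ultrafilter by blast
next
  fix U assume U: "ultrafilter U" and near: "\<And>E. E \<in> U \<Longrightarrow> \<exists>V\<in>(\<lambda>S. S \<odot> R) ` K. E \<in> V"
  define Bs where "Bs = (\<lambda>E. {W. ultrafilter W \<and> prefix_set R E \<in> W})"
  have "\<exists>W. ultrafilter W \<and> (\<forall>K'\<in>insert K (Bs ` U). W \<in> K')"
  proof (rule ultra_closed_common_point)
    fix K' assume "K' \<in> insert K (Bs ` U)"
    then show "ultra_closed K'" using K ultra_closed_basic unfolding Bs_def by auto
  next
    fix \<K>0 assume k: "finite \<K>0" "\<K>0 \<subseteq> insert K (Bs ` U)"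
    then have "\<K>0 - {K} \<subseteq> Bs ` U" "finite (\<K>0 - {K})" by auto
    then obtain G where G: "G \<subseteq> U" "finite G" "\<K>0 - {K} = Bs ` G"
      using finite_subset_image by metis
    have "\<Inter>G \<in> U" using ultrafilter_Inter[OF U G(2) G(1)] .
    then obtain V where V: "V \<in> K" "prefix_set R (\<Inter>G) \<in> V"
      using near mem_umult_iff by blast
    have uV: "ultrafilter V" using V K ultra_closed_ultrafilter by blast
    have "\<forall>K'\<in>\<K>0. V \<in> K'"
    proof
      fix K' assume "K' \<in> \<K>0"
      then have "K' = K \<or> K' \<in> Bs ` G" using G(3) by blast
      then show "V \<in> K'"
      proof
        assume "K' \<in> Bs ` G"
        then obtain E where E: "E \<in> G" "K' = Bs E" by blast
        have "prefix_set R (\<Inter>G) \<subseteq> prefix_set R E"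
          using prefix_set_mono[OF R Inter_lower[OF E(1)]] .
        then have "prefix_set R E \<in> V" using ultrafilter_mono[OF uV V(2)] by blast
        then show "V \<in> K'" unfolding E(2) Bs_def using uV by simp
      qed (use V in simp)
    qed
    then show "\<exists>W. ultrafilter W \<and> (\<forall>K'\<in>\<K>0. W \<in> K')" using uV by blast
  qed
  then obtain W where W: "ultrafilter W" "\<forall>K'\<in>insert K (Bs ` U). W \<in> K'" by blast
  have "U \<subseteq> W \<odot> R"
  proof
    fix E assume "E \<in> U"
    then have "W \<in> Bs E" using W(2) by blast
    then show "E \<in> W \<odot> R" unfolding Bs_def mem_umult_iff by simp
  qed
  then have "U = W \<odot> R" using ultrafilter_subset_eq U ultrafilter_umult[OF W(1) R] by blast
  then show "U \<in> (\<lambda>S. S \<odot> R) ` K" using W(2) by blast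
qed

lemma ultra_closed_left_stabilizer:
  assumes K: "ultra_closed K" and R: "ultrafilter R"
  shows "ultra_closed {S\<in>K. S \<odot> R = R}"
proof (rule ultra_closedI)
  fix U assume "U \<in> {S\<in>K. S \<odot> R = R}" then show "ultrafilter U"
    using K ultra_closed_ultrafilter by blast
next
  fix U assume U: "ultrafilter U" and near: "\<And>E. E \<in> U \<Longrightarrow> \<exists>V\<in>{S\<in>K. S \<odot> R = R}. E \<in> V"
  have "U \<in> K" using ultra_closed_member[OF K U] near by blast
  moreover have "R \<subseteq> U \<odot> R"
  proof
    fix E assume E: "E \<in> R"
    show "E \<in> U \<odot> R"
    proof (rule ccontr)
      assume "E \<notin> U \<odot> R"
      then have "- prefix_set R E \<in> U" using ultrafilter_Compl_iff[OF U] mem_umult_iff by blast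
      then obtain V where V: "V \<in> K" "V \<odot> R = R" "- prefix_set R E \<in> V" using near by blast
      then have "ultrafilter V" using K ultra_closed_ultrafilter by blast
      then show False using E V mem_umult_iff ultrafilter_Compl_iff by metis
    qed
  qed
  then have "R = U \<odot> R" using ultrafilter_subset_eq R ultrafilter_umult[OF U R] by blast
  ultimately show "U \<in> {S\<in>K. S \<odot> R = R}" by simp
qed

definition mult_closed :: "'b list set set set \<Rightarrow> bool" where
  "mult_closed K \<longleftrightarrow> (\<forall>P\<in>K. \<forall>Q\<in>K. P \<odot> Q \<in> K)"

lemma mult_closedD: "mult_closed K \<Longrightarrow> P \<in> K \<Longrightarrow> Q \<in> K \<Longrightarrow> P \<odot> Q \<in> K"
  unfolding mult_closed_def by blast

lemma mult_closed_Inter: "(\<And>L. L \<in> \<C> \<Longrightarrow> mult_closed L) \<Longrightarrow> mult_closed (\<Inter>\<C>)"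
  unfolding mult_closed_def by blast

theorem Ellis_Numakura:
  assumes K: "ultra_closed K" "K \<noteq> {}" "mult_closed K"
  obtains P where "P \<in> K" "P \<odot> P = P"
proof -
  obtain L where L: "L \<subseteq> K" "ultra_closed L" "L \<noteq> {}" "mult_closed L"
    and min: "\<And>L'. L' \<subseteq> L \<Longrightarrow> ultra_closed L' \<Longrightarrow> L' \<noteq> {} \<Longrightarrow> mult_closed L' \<Longrightarrow> L' = L"
    using minimal_ultra_closed[OF K mult_closed_Inter] by blast
  from L(3) obtain R where R: "R \<in> L" by blast
  have uR: "ultrafilter R" using R L(2) ultra_closed_ultrafilter by blast
  have "(\<lambda>S. S \<odot> R) ` L = L"
  proof (rule min)
    show "(\<lambda>S. S \<odot> R) ` L \<subseteq> L" using L(4) R unfolding mult_closed_def by blast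
    show "ultra_closed ((\<lambda>S. S \<odot> R) ` L)" by (rule ultra_closed_umult_right[OF L(2) uR])
    show "(\<lambda>S. S \<odot> R) ` L \<noteq> {}" using L(3) by blast
    show "mult_closed ((\<lambda>S. S \<odot> R) ` L)" unfolding mult_closed_def
    proof (intro ballI)
      fix P Q assume "P \<in> (\<lambda>S. S \<odot> R) ` L" "Q \<in> (\<lambda>S. S \<odot> R) ` L"
      then obtain S S' where S: "S \<in> L" "S' \<in> L" "P = S \<odot> R" "Q = S' \<odot> R" by blast
      then have "P \<odot> Q = (S \<odot> R \<odot> S') \<odot> R" by (simp add: umult_assoc)
      moreover have "S \<odot> R \<odot> S' \<in> L" using S R L(4) unfolding mult_closed_def by blast
      ultimately show "P \<odot> Q \<in> (\<lambda>S. S \<odot> R) ` L" by blast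
    qed
  qed
  then obtain S0 where S0: "S0 \<in> L" "S0 \<odot> R = R" using R by (metis imageE)
  have "{S\<in>L. S \<odot> R = R} = L"
  proof (rule min)
    show "ultra_closed {S\<in>L. S \<odot> R = R}" by (rule ultra_closed_left_stabilizer[OF L(2) uR])
    show "{S\<in>L. S \<odot> R = R} \<noteq> {}" using S0 by blast
    show "mult_closed {S\<in>L. S \<odot> R = R}"
      using L(4) unfolding mult_closed_def by (auto simp: umult_assoc)
  qed blast
  then have "R \<odot> R = R" using R by blast
  then show ?thesis using R L(1) that by blast
qed

definition left_ideal :: "'b list set set set \<Rightarrow> 'b list set set set \<Rightarrow> bool" where
  "left_ideal S L \<longleftrightarrow> (\<forall>s\<in>S. \<forall>y\<in>L. s \<odot> y \<in> L)"

lemma left_ideal_Inter: "(\<And>L. L \<in> \<C> \<Longrightarrow> left_ideal S L) \<Longrightarrow> left_ideal S (\<Inter>\<C>)"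
  unfolding left_ideal_def by blast

lemma left_ideal_umult_right:
  assumes "mult_closed S"
  shows "left_ideal S ((\<lambda>s. s \<odot> y) ` S)"
  unfolding left_ideal_def
proof (intro ballI)
  fix s z assume "s \<in> S" "z \<in> (\<lambda>s. s \<odot> y) ` S"
  then obtain s' where "s' \<in> S" "s \<odot> z = s \<odot> s' \<odot> y" by (auto simp: umult_assoc)
  moreover have "s \<odot> s' \<in> S" using \<open>s \<in> S\<close> \<open>s' \<in> S\<close> assms unfolding mult_closed_def by blast
  ultimately show "s \<odot> z \<in> (\<lambda>s. s \<odot> y) ` S" by auto
qed

lemma minimal_left_ideal:
  assumes S: "ultra_closed S" "mult_closed S" and P: "P \<in> S"
  obtains L where "ultra_closed L" "L \<noteq> {}" "L \<subseteq> (\<lambda>s. s \<odot> P) ` S"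
    "\<And>y. y \<in> L \<Longrightarrow> (\<lambda>s. s \<odot> y) ` S = L"
proof -
  have closed_umult: "ultra_closed ((\<lambda>s. s \<odot> y) ` S)" if "y \<in> S" for y
    using ultra_closed_umult_right[OF S(1)] that S(1) ultra_closed_ultrafilter by blast
  have nonempty: "(\<lambda>s. s \<odot> y) ` S \<noteq> {}" for y
    using P by blast
  obtain L where L: "L \<subseteq> (\<lambda>s. s \<odot> P) ` S" "ultra_closed L" "L \<noteq> {}" "left_ideal S L"
    and min: "\<And>L'. L' \<subseteq> L \<Longrightarrow> ultra_closed L' \<Longrightarrow> L' \<noteq> {} \<Longrightarrow> left_ideal S L' \<Longrightarrow> L' = L"
    using minimal_ultra_closed[OF closed_umult[OF P] nonempty left_ideal_umult_right[OF S(2)]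
        left_ideal_Inter] by blast
  have LS: "L \<subseteq> S" using L(1) S(2) P unfolding mult_closed_def by blast
  have gen: "(\<lambda>s. s \<odot> y) ` S = L" if y: "y \<in> L" for y
  proof (rule min)
    show "(\<lambda>s. s \<odot> y) ` S \<subseteq> L" using L(4) y unfolding left_ideal_def by blast
    show "ultra_closed ((\<lambda>s. s \<odot> y) ` S)" using closed_umult y LS by blast
  qed (rule nonempty, rule left_ideal_umult_right[OF S(2)])
  show ?thesis using L(2,3,1) gen by (rule that)
qed

theorem minimal_idempotent_below:
  assumes S: "ultra_closed S" "mult_closed S" and P: "P \<in> S" "P \<odot> P = P"
  obtains Q where "Q \<in> S" "Q \<odot> Q = Q" "Q \<odot> P = Q" "P \<odot> Q = Q"
    "\<forall>R\<in>S. R \<odot> R = R \<longrightarrow> R \<odot> Q = R \<longrightarrow> Q \<odot> R = R \<longrightarrow> R = Q"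
    "\<forall>I. I \<subseteq> S \<longrightarrow> I \<noteq> {} \<longrightarrow> (\<forall>s\<in>S. \<forall>y\<in>I. s \<odot> y \<in> I \<and> y \<odot> s \<in> I) \<longrightarrow> Q \<in> I"
proof -
  obtain L where L: "ultra_closed L" "L \<noteq> {}" "L \<subseteq> (\<lambda>s. s \<odot> P) ` S"
    and gen: "\<And>y. y \<in> L \<Longrightarrow> (\<lambda>s. s \<odot> y) ` S = L"
    using minimal_left_ideal[OF S P(1)] by blast
  have LS: "L \<subseteq> S" using L(3) S(2) P(1) unfolding mult_closed_def by blast
  have left_ideal: "s \<odot> y \<in> L" if "s \<in> S" "y \<in> L" for s y
    using gen[OF that(2)] that(1) by blast
  have "mult_closed L" unfolding mult_closed_def using left_ideal LS by blast
  then obtain e where e: "e \<in> L" "e \<odot> e = e" by (rule Ellis_Numakura[OF L(1,2)])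
  obtain s0 where "s0 \<in> S" "e = s0 \<odot> P" using e(1) L(3) by blast
  then have eP: "e \<odot> P = e" using P(2) by (metis umult_assoc)
  define Q where "Q = P \<odot> e"
  have QL: "Q \<in> L" unfolding Q_def using left_ideal P(1) e(1) by blast
  have QQ: "Q \<odot> Q = Q" unfolding Q_def by (metis umult_assoc eP e(2))
  have QP: "Q \<odot> P = Q" unfolding Q_def by (metis umult_assoc eP)
  have PQ: "P \<odot> Q = Q" unfolding Q_def by (metis umult_assoc P(2))
  show ?thesis
  proof (rule that[OF _ QQ QP PQ]; (intro ballI allI impI)?)
    show "Q \<in> S" using QL LS by blast
  next
    fix R assume R: "R \<in> S" "R \<odot> R = R" "R \<odot> Q = R" "Q \<odot> R = R"
    have "R \<in> L" using left_ideal[OF R(1) QL] R(3) by simp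
    then have "Q \<in> (\<lambda>s. s \<odot> R) ` S" using gen QL by blast
    then obtain s where "s \<in> S" "Q = s \<odot> R" by blast
    then have "Q \<odot> R = Q" using R(2) by (metis umult_assoc)
    then show "R = Q" using R(4) by simp
  next
    fix I assume I: "I \<subseteq> S" "I \<noteq> {}" "\<forall>s\<in>S. \<forall>y\<in>I. s \<odot> y \<in> I \<and> y \<odot> s \<in> I"
    from I(2) obtain y where y: "y \<in> I" by blast
    have yQ: "y \<odot> Q \<in> I" using I(3) y QL LS by blast
    have "y \<odot> Q \<in> L" using left_ideal QL y I(1) by blast
    then have "Q \<in> (\<lambda>s. s \<odot> (y \<odot> Q)) ` S" using gen QL by blast
    then obtain s where "s \<in> S" "Q = s \<odot> (y \<odot> Q)" by blast
    then show "Q \<in> I" using I(3) yQ by metis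
  qed
qed

section \<open>Ultrafilters on located words\<close>

lemma located_words_iff:
  "v \<in> located_words C x \<longleftrightarrow> v \<noteq> [] \<and> (\<forall>a\<in>set v. snd a \<in> C \<union> {x}) \<and> sorted_wrt (<) (map fst v)"
proof
  assume "v \<in> located_words C x"
  then obtain ms where ms: "v \<noteq> []" "length ms = length v" "sorted_wrt (<) ms"
    "\<forall>i<length v. v ! i \<in> Xn C x (ms ! i)" unfolding located_words_def by blast
  have "map fst v = ms" using ms(2,4) by (intro nth_equalityI) (auto simp: Xn_def)
  moreover have "\<forall>a\<in>set v. snd a \<in> C \<union> {x}"
  proof
    fix a assume "a \<in> set v"
    then obtain i where "i < length v" "v ! i = a" by (auto simp: in_set_conv_nth)
    then have "a \<in> Xn C x (ms ! i)" using ms(4) by blast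
    then show "snd a \<in> C \<union> {x}" unfolding Xn_def by auto
  qed
  ultimately show "v \<noteq> [] \<and> (\<forall>a\<in>set v. snd a \<in> C \<union> {x}) \<and> sorted_wrt (<) (map fst v)"
    using ms by simp
next
  assume a: "v \<noteq> [] \<and> (\<forall>a\<in>set v. snd a \<in> C \<union> {x}) \<and> sorted_wrt (<) (map fst v)"
  have "\<forall>i<length v. v ! i \<in> Xn C x (map fst v ! i)"
  proof (intro allI impI)
    fix i assume "i < length v"
    then have "v ! i \<in> set v" by simp
    then have "snd (v ! i) \<in> C \<union> {x}" using a by blast
    then show "v ! i \<in> Xn C x (map fst v ! i)" using \<open>i < length v\<close> unfolding Xn_def
      by (cases "v ! i") auto
  qed
  then show "v \<in> located_words C x" unfolding located_words_def using a
    by (intro CollectI conjI exI[of _ "map fst v"]) auto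
qed

lemma located_words_append:
  assumes "u \<in> located_words C x" "v \<in> located_words C x"
    and "\<forall>a\<in>set u. \<forall>b\<in>set v. fst a < fst b"
  shows "u @ v \<in> located_words C x"
  using assms unfolding located_words_iff by (auto simp: sorted_wrt_append)

lemma basic_seqI:
  assumes located: "\<And>i. w i \<in> located_words C x"
    and ordered: "\<And>i j a b. i < j \<Longrightarrow> a \<in> set (w i) \<Longrightarrow> b \<in> set (w j) \<Longrightarrow> fst a < fst b"
  shows "basic_seq C x w"
proof -
  have "concat (map w is) \<in> located_words C x" if "is \<noteq> []" "sorted_wrt (<) is" for "is"
    using that
  proof (induction "is")
    case (Cons i js)
    show ?case
    proof (cases "js = []")
      case False
      have "\<forall>a\<in>set (w i). \<forall>b\<in>set (concat (map w js)). fst a < fst b"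
      proof (intro ballI)
        fix a b assume a: "a \<in> set (w i)" and "b \<in> set (concat (map w js))"
        then obtain j where "j \<in> set js" "b \<in> set (w j)" by auto
        moreover have "i < j" using Cons.prems(2) \<open>j \<in> set js\<close> by simp
        ultimately show "fst a < fst b" using ordered a by blast
      qed
      then show ?thesis using located_words_append[OF located Cons.IH] False Cons.prems by simp
    qed (simp add: located)
  qed simp
  then show ?thesis unfolding basic_seq_def using located by blast
qed

definition located_words_above :: "'a set \<Rightarrow> 'a \<Rightarrow> nat \<Rightarrow> (nat \<times> 'a) list set" where
  "located_words_above C x n = {v \<in> located_words C x. \<forall>a\<in>set v. n < fst a}"

definition located_ultras :: "'a set \<Rightarrow> 'a \<Rightarrow> (nat \<times> 'a) list set set set" where
  "located_ultras C x = {U. ultrafilter U \<and> (\<forall>n. located_words_above C x n \<in> U)}"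

lemma located_words_above_antimono: "m \<le> n \<Longrightarrow> located_words_above C x n \<subseteq> located_words_above C x m"
  unfolding located_words_above_def by auto

lemma ultra_closed_located_ultras: "ultra_closed (located_ultras C x)"
proof -
  have "located_ultras C x = \<Inter>(range (\<lambda>n. {U. ultrafilter U \<and> located_words_above C x n \<in> U}))"
    unfolding located_ultras_def by blast
  then show ?thesis by (auto intro: ultra_closed_Inter simp: ultra_closed_basic)
qed

lemma located_words_above_prefix_set:
  assumes Q: "Q \<in> located_ultras C x"
  shows "located_words_above C x n \<subseteq> prefix_set Q (located_words_above C x n)"
proof
  fix u assume u: "u \<in> located_words_above C x n"
  define m where "m = Max (fst ` set u)"
  have fin: "finite (fst ` set u)" by simp
  have le: "\<forall>a\<in>set u. fst a \<le> m" unfolding m_def using fin by auto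
  have ne: "u \<noteq> []" using u unfolding located_words_above_def located_words_iff by blast
  have "n < m" using u ne le unfolding located_words_above_def by (cases u) auto
  have "located_words_above C x m \<subseteq> {v. u @ v \<in> located_words_above C x n}"
  proof
    fix v assume v: "v \<in> located_words_above C x m"
    have sep: "\<forall>a\<in>set u. \<forall>b\<in>set v. fst a < fst b"
    proof (intro ballI)
      fix a b assume "a \<in> set u" "b \<in> set v"
      then have "fst a \<le> m" "m < fst b" using le v unfolding located_words_above_def by auto
      then show "fst a < fst b" by simp
    qed
    have lu: "u \<in> located_words C x" and lv: "v \<in> located_words C x"
      using u v unfolding located_words_above_def by simp_all
    have "u @ v \<in> located_words C x"
      using located_words_append[OF lu lv sep] .
    moreover have "\<forall>a\<in>set (u @ v). n < fst a"
      using u v \<open>n < m\<close> unfolding located_words_above_def by auto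
    ultimately show "v \<in> {v. u @ v \<in> located_words_above C x n}"
      unfolding located_words_above_def by simp
  qed
  moreover have "located_words_above C x m \<in> Q" using Q unfolding located_ultras_def by blast
  moreover have "ultrafilter Q" using Q unfolding located_ultras_def by blast
  ultimately show "u \<in> prefix_set Q (located_words_above C x n)"
    unfolding prefix_set_def using ultrafilter_mono by blast
qed

lemma mult_closed_located_ultras: "mult_closed (located_ultras C x)"
  unfolding mult_closed_def
proof (intro ballI)
  fix P Q assume P: "P \<in> located_ultras C x" and Q: "Q \<in> located_ultras C x"
  have uP: "ultrafilter P" and uQ: "ultrafilter Q" using P Q unfolding located_ultras_def by auto
  have "located_words_above C x n \<in> P \<odot> Q" for n
    unfolding mem_umult_iff
    using ultrafilter_mono[OF uP _ located_words_above_prefix_set[OF Q]] P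
    unfolding located_ultras_def by blast
  then show "P \<odot> Q \<in> located_ultras C x"
    unfolding located_ultras_def using ultrafilter_umult[OF uP uQ] by blast
qed

lemma located_ultras_member:
  assumes "\<And>n. \<exists>v\<in>X. v \<in> located_words_above C x n"
  shows "\<exists>U\<in>located_ultras C x. X \<in> U"
proof -
  have "fip (insert X (range (located_words_above C x)))" unfolding fip_def
  proof (intro allI impI)
    fix H assume H: "finite H" "H \<subseteq> insert X (range (located_words_above C x))"
    then have "H - {X} \<subseteq> located_words_above C x ` UNIV" "finite (H - {X})" by auto
    then obtain Ns where Ns: "finite Ns" "H - {X} = located_words_above C x ` Ns"
      using finite_subset_image by metis
    obtain v where v: "v \<in> X" "v \<in> located_words_above C x (Max (insert 0 Ns))"
      using assms by blast
    have "v \<in> located_words_above C x n" if "n \<in> Ns" for n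
      using located_words_above_antimono[of n "Max (insert 0 Ns)" C x] v(2) that Ns(1) by auto
    then have "v \<in> \<Inter>H" using v(1) Ns(2) by blast
    then show "\<Inter>H \<noteq> {}" by blast
  qed
  then obtain U where "ultrafilter U" "insert X (range (located_words_above C x)) \<subseteq> U"
    using ultrafilter_exists by blast
  then show ?thesis unfolding located_ultras_def by blast
qed

definition subst_ultra :: "'a \<Rightarrow> 'a \<Rightarrow> (nat \<times> 'a) list set set \<Rightarrow> (nat \<times> 'a) list set set" where
  "subst_ultra x c P = {E. {w. subst x w c \<in> E} \<in> P}"

lemma subst_append: "subst x (u @ v) c = subst x u c @ subst x v c"
  unfolding subst_def by simp

lemma subst_ultra_umult: "subst_ultra x c (P \<odot> Q) = subst_ultra x c P \<odot> subst_ultra x c Q"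
  unfolding subst_ultra_def umult_def prefix_set_def by (simp add: subst_append)

lemma subst_ultra_principal_ultra_Nil: "subst_ultra x c (principal_ultra []) = principal_ultra []"
  unfolding subst_ultra_def principal_ultra_def subst_def by simp

lemma ultrafilter_subst_ultra:
  assumes "ultrafilter P"
  shows "ultrafilter (subst_ultra x c P)"
proof -
  have e: "{w. subst x w c \<in> - E} = - {w. subst x w c \<in> E}" for E by auto
  have i: "{w. subst x w c \<in> E \<inter> F} = {w. subst x w c \<in> E} \<inter> {w. subst x w c \<in> F}" for E F
    by auto
  show ?thesis unfolding ultrafilter_def subst_ultra_def
  proof (intro conjI allI impI; simp only: mem_Collect_eq e i)
    show "{w. subst x w c \<in> UNIV} \<in> P" using ultrafilter_UNIV[OF assms] by simp
    show "{w. subst x w c \<in> {}} \<notin> P" using ultrafilter_empty[OF assms] by simp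
  next
    fix E F assume "{w. subst x w c \<in> E} \<in> P" "E \<subseteq> F"
    moreover have "{w. subst x w c \<in> E} \<subseteq> {w. subst x w c \<in> F}" using \<open>E \<subseteq> F\<close> by blast
    ultimately show "{w. subst x w c \<in> F} \<in> P" using ultrafilter_mono[OF assms] by blast
  next
    fix E F assume "{w. subst x w c \<in> E} \<in> P" "{w. subst x w c \<in> F} \<in> P"
    then show "{w. subst x w c \<in> E} \<inter> {w. subst x w c \<in> F} \<in> P"
      using ultrafilter_Int[OF assms] by blast
  next
    fix E show "{w. subst x w c \<in> E} \<in> P \<or> - {w. subst x w c \<in> E} \<in> P"
      using ultrafilter_Compl_iff[OF assms] by blast
  qed
qed

lemma subst_located_words_above:
  assumes "v \<in> located_words_above C x n" "c \<in> C'" "C \<subseteq> C'"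
  shows "subst x v c \<in> located_words_above C' x n"
proof -
  have mf: "map fst (subst x v c) = map fst v" unfolding subst_def by (induction v) auto
  have st: "set (subst x v c) = (\<lambda>(m, d). if d = x then (m, c) else (m, d)) ` set v"
    unfolding subst_def by simp
  have v: "v \<noteq> []" "\<forall>a\<in>set v. snd a \<in> C \<union> {x}" "sorted_wrt (<) (map fst v)" "\<forall>a\<in>set v. n < fst a"
    using assms(1) unfolding located_words_above_def located_words_iff by auto
  have sn: "\<forall>a\<in>set (subst x v c). snd a \<in> C' \<union> {x} \<and> n < fst a"
  proof
    fix a assume "a \<in> set (subst x v c)"
    then obtain m d where md: "(m, d) \<in> set v" "a = (if d = x then (m, c) else (m, d))"
      unfolding st by auto
    then have "d \<in> C \<union> {x}" "n < m" using v(2,4) by fastforce+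
    then show "snd a \<in> C' \<union> {x} \<and> n < fst a" using md(2) assms(2,3) by auto
  qed
  have "subst x v c \<noteq> []" using v(1) unfolding subst_def by simp
  then show ?thesis unfolding located_words_above_def located_words_iff using sn mf v(3) by simp
qed

lemma subst_ultra_located_ultras:
  assumes "P \<in> located_ultras C x" "c \<in> C'" "C \<subseteq> C'"
  shows "subst_ultra x c P \<in> located_ultras C' x"
proof -
  have uP: "ultrafilter P" using assms unfolding located_ultras_def by blast
  have "located_words_above C' x n \<in> subst_ultra x c P" for n
  proof -
    have "located_words_above C x n \<subseteq> {w. subst x w c \<in> located_words_above C' x n}"
      using subst_located_words_above[OF _ assms(2,3)] by blast
    moreover have "located_words_above C x n \<in> P"
      using assms(1) unfolding located_ultras_def by blast
    ultimately have "{w. subst x w c \<in> located_words_above C' x n} \<in> P"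
      using ultrafilter_mono[OF uP] by blast
    then show ?thesis unfolding subst_ultra_def by simp
  qed
  then show ?thesis using ultrafilter_subst_ultra[OF uP] unfolding located_ultras_def by blast
qed

definition var_words :: "'a \<Rightarrow> (nat \<times> 'a) list set" where
  "var_words x = {v. occurs x v}"

definition constant_words :: "'a \<Rightarrow> (nat \<times> 'a) list set" where
  "constant_words x = {v. \<forall>a\<in>set v. snd a \<noteq> x}"

lemma subst_constant_word: "v \<in> constant_words x \<Longrightarrow> subst x v c = v"
  unfolding constant_words_def subst_def by (induction v) auto

lemma subst_in_constant_words: "c \<noteq> x \<Longrightarrow> subst x v c \<in> constant_words x"
  unfolding constant_words_def subst_def by (auto split: if_splits)

lemma subst_ultra_constant:
  assumes P: "ultrafilter P" "constant_words x \<in> P"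
  shows "subst_ultra x c P = P"
proof -
  have "E \<in> subst_ultra x c P \<longleftrightarrow> E \<in> P" for E
  proof -
    have "{w. subst x w c \<in> E} \<inter> constant_words x = E \<inter> constant_words x"
      using subst_constant_word by fastforce
    then have "{w. subst x w c \<in> E} \<inter> constant_words x \<in> P \<longleftrightarrow> E \<inter> constant_words x \<in> P" by simp
    then show ?thesis unfolding subst_ultra_def using ultrafilter_Int_iff[OF P(1)] P(2) by simp
  qed
  then show ?thesis by blast
qed

lemma var_words_umult_left:
  assumes P: "ultrafilter P" and Q: "ultrafilter Q" and "var_words x \<in> P"
  shows "var_words x \<in> P \<odot> Q"
proof -
  have "var_words x \<subseteq> prefix_set Q (var_words x)"
  proof
    fix u assume "u \<in> var_words x"
    then have "{v. u @ v \<in> var_words x} = UNIV" unfolding var_words_def occurs_def by auto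
    then show "u \<in> prefix_set Q (var_words x)"
      unfolding prefix_set_def using ultrafilter_UNIV[OF Q] by simp
  qed
  then show ?thesis unfolding mem_umult_iff using ultrafilter_mono[OF P assms(3)] by blast
qed

lemma var_words_umult_right:
  assumes P: "ultrafilter P" and Q: "ultrafilter Q" and "var_words x \<in> Q"
  shows "var_words x \<in> P \<odot> Q"
proof -
  have "var_words x \<subseteq> {v. u @ v \<in> var_words x}" for u
    unfolding var_words_def occurs_def by auto
  then have "prefix_set Q (var_words x) = UNIV"
    unfolding prefix_set_def using ultrafilter_mono[OF Q assms(3)] by blast
  then show ?thesis unfolding mem_umult_iff using ultrafilter_UNIV[OF P] by simp
qed

lemma constant_words_umult:
  assumes P: "ultrafilter P" "constant_words x \<in> P" and Q: "ultrafilter Q" "constant_words x \<in> Q"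
  shows "constant_words x \<in> P \<odot> Q"
proof -
  have "constant_words x \<subseteq> prefix_set Q (constant_words x)"
  proof
    fix u assume u: "u \<in> constant_words x"
    have "constant_words x \<subseteq> {v. u @ v \<in> constant_words x}"
      using u unfolding constant_words_def by auto
    then show "u \<in> prefix_set Q (constant_words x)"
      unfolding prefix_set_def using ultrafilter_mono[OF Q] by blast
  qed
  then show ?thesis unfolding mem_umult_iff using ultrafilter_mono[OF P] by blast
qed

lemma located_var_ultras_ideal:
  "\<forall>s\<in>located_ultras B x. \<forall>y\<in>located_ultras B x \<inter> {U. ultrafilter U \<and> var_words x \<in> U}.
     s \<odot> y \<in> located_ultras B x \<inter> {U. ultrafilter U \<and> var_words x \<in> U} \<and>
     y \<odot> s \<in> located_ultras B x \<inter> {U. ultrafilter U \<and> var_words x \<in> U}"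
proof (intro ballI)
  fix s y assume s: "s \<in> located_ultras B x"
    and "y \<in> located_ultras B x \<inter> {U. ultrafilter U \<and> var_words x \<in> U}"
  then have y: "y \<in> located_ultras B x" "var_words x \<in> y" by simp_all
  have us: "ultrafilter s" and uy: "ultrafilter y"
    using s y unfolding located_ultras_def by simp_all
  show "s \<odot> y \<in> located_ultras B x \<inter> {U. ultrafilter U \<and> var_words x \<in> U} \<and>
    y \<odot> s \<in> located_ultras B x \<inter> {U. ultrafilter U \<and> var_words x \<in> U}"
    using mult_closedD[OF mult_closed_located_ultras s y(1)] var_words_umult_right[OF us uy y(2)]
      mult_closedD[OF mult_closed_located_ultras y(1) s] var_words_umult_left[OF uy us y(2)]
      ultrafilter_umult[OF us uy] ultrafilter_umult[OF uy us] by simp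
qed

lemma located_var_ultras_nonempty: "located_ultras B x \<inter> {U. ultrafilter U \<and> var_words x \<in> U} \<noteq> {}"
proof -
  have "\<exists>U\<in>located_ultras B x. var_words x \<in> U"
  proof (rule located_ultras_member)
    fix n show "\<exists>v\<in>var_words x. v \<in> located_words_above B x n"
      by (rule bexI[of _ "[(Suc n, x)]"])
        (auto simp: var_words_def occurs_def located_words_above_def located_words_iff)
  qed
  then obtain U where "U \<in> located_ultras B x" "var_words x \<in> U" by blast
  then have "U \<in> located_ultras B x \<inter> {U. ultrafilter U \<and> var_words x \<in> U}"
    unfolding located_ultras_def by simp
  then show ?thesis by blast
qed

lemma located_constant_ultras_nonempty:
  assumes "b \<in> B" "x \<notin> B"
  shows "located_ultras B x \<inter> {U. ultrafilter U \<and> constant_words x \<in> U} \<noteq> {}"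
proof -
  have "\<exists>U\<in>located_ultras B x. constant_words x \<in> U"
  proof (rule located_ultras_member)
    fix n show "\<exists>v\<in>constant_words x. v \<in> located_words_above B x n"
      by (rule bexI[of _ "[(Suc n, b)]"])
        (use assms in \<open>auto simp: constant_words_def located_words_above_def located_words_iff\<close>)
  qed
  then obtain U where "U \<in> located_ultras B x" "constant_words x \<in> U" by blast
  then have "U \<in> located_ultras B x \<inter> {U. ultrafilter U \<and> constant_words x \<in> U}"
    unfolding located_ultras_def by simp
  then show ?thesis by blast
qed

lemma subst_ultra_located_constant:
  assumes q: "q \<in> located_ultras B x" and "b \<in> B" "x \<notin> B"
  shows "subst_ultra x b q \<in> located_ultras B x \<inter> {U. ultrafilter U \<and> constant_words x \<in> U}"
proof -
  have uq: "ultrafilter q" using q unfolding located_ultras_def by blast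
  have "{w. subst x w b \<in> constant_words x} = UNIV"
    using subst_in_constant_words[of b x] assms(2,3) by auto
  then have "constant_words x \<in> subst_ultra x b q"
    unfolding subst_ultra_def using ultrafilter_UNIV[OF uq] by simp
  then show ?thesis
    using subst_ultra_located_ultras[OF q assms(2)] ultrafilter_subst_ultra[OF uq] by simp
qed

lemma mult_closed_located_constant_ultras:
  "mult_closed (located_ultras B x \<inter> {U. ultrafilter U \<and> constant_words x \<in> U})"
  unfolding mult_closed_def
proof (intro ballI)
  fix P Q
  assume "P \<in> located_ultras B x \<inter> {U. ultrafilter U \<and> constant_words x \<in> U}"
    and "Q \<in> located_ultras B x \<inter> {U. ultrafilter U \<and> constant_words x \<in> U}"
  then have P: "P \<in> located_ultras B x" "ultrafilter P" "constant_words x \<in> P"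
    and Q: "Q \<in> located_ultras B x" "ultrafilter Q" "constant_words x \<in> Q" by simp_all
  show "P \<odot> Q \<in> located_ultras B x \<inter> {U. ultrafilter U \<and> constant_words x \<in> U}"
    using mult_closedD[OF mult_closed_located_ultras P(1) Q(1)] ultrafilter_umult[OF P(2) Q(2)]
      constant_words_umult[OF P(2,3) Q(2,3)] by simp
qed

text \<open>Words containing \<open>x\<close> carry an ideal, which contains the minimal idempotent \<open>q\<close>;
  and each \<open>q[b]\<close>, \<open>b \<in> B\<close>, is an idempotent without variable below \<open>p\<close>, hence \<open>p\<close>.\<close>
lemma idempotent_pair_exists_nonempty:
  assumes "b0 \<in> B" and xB: "x \<notin> B"
  shows "\<exists>p q. q \<in> located_ultras B x \<and> var_words x \<in> q \<and>
    q \<odot> q = q \<and> q \<odot> p = q \<and> p \<odot> q = q \<and> p \<odot> p = p \<and>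
    (\<forall>b\<in>B. subst_ultra x b q = p) \<and> (\<forall>c. subst_ultra x c p = p)"
proof -
  let ?M = "located_ultras B x"
  let ?T = "located_ultras B x \<inter> {U. ultrafilter U \<and> constant_words x \<in> U}"
  have T_closed: "ultra_closed ?T"
    by (rule ultra_closed_Int[OF ultra_closed_located_ultras ultra_closed_basic])
  obtain p0 where p0: "p0 \<in> ?T" "p0 \<odot> p0 = p0"
    by (rule Ellis_Numakura[OF T_closed located_constant_ultras_nonempty[OF assms]
          mult_closed_located_constant_ultras])
  obtain p where p: "p \<in> ?T" "p \<odot> p = p" "p \<odot> p0 = p" "p0 \<odot> p = p"
    and p_min: "\<forall>R\<in>?T. R \<odot> R = R \<longrightarrow> R \<odot> p = R \<longrightarrow> p \<odot> R = R \<longrightarrow> R = p"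
    and "\<forall>I. I \<subseteq> ?T \<longrightarrow> I \<noteq> {} \<longrightarrow> (\<forall>s\<in>?T. \<forall>y\<in>I. s \<odot> y \<in> I \<and> y \<odot> s \<in> I) \<longrightarrow> p \<in> I"
    by (rule minimal_idempotent_below[OF T_closed mult_closed_located_constant_ultras p0])
  have pM: "p \<in> ?M" using p(1) by simp
  obtain q where q: "q \<in> ?M" "q \<odot> q = q" "q \<odot> p = q" "p \<odot> q = q"
    and "\<forall>R\<in>?M. R \<odot> R = R \<longrightarrow> R \<odot> q = R \<longrightarrow> q \<odot> R = R \<longrightarrow> R = q"
    and q_ideal: "\<forall>I. I \<subseteq> ?M \<longrightarrow> I \<noteq> {} \<longrightarrow> (\<forall>s\<in>?M. \<forall>y\<in>I. s \<odot> y \<in> I \<and> y \<odot> s \<in> I) \<longrightarrow> q \<in> I"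
    by (rule minimal_idempotent_below[OF ultra_closed_located_ultras mult_closed_located_ultras
          pM p(2)])
  have "q \<in> located_ultras B x \<inter> {U. ultrafilter U \<and> var_words x \<in> U}"
    by (rule q_ideal[rule_format, OF Int_lower1 located_var_ultras_nonempty
          located_var_ultras_ideal[rule_format]])
  then have "var_words x \<in> q" by simp
  moreover have p_subst: "subst_ultra x c p = p" for c
    by (rule subst_ultra_constant) (use p(1) in simp_all)
  moreover have "subst_ultra x b q = p" if b: "b \<in> B" for b
  proof -
    have "subst_ultra x b q \<odot> subst_ultra x b q = subst_ultra x b q"
      by (metis q(2) subst_ultra_umult)
    moreover have "subst_ultra x b q \<odot> p = subst_ultra x b q"
      by (metis q(3) subst_ultra_umult p_subst)
    moreover have "p \<odot> subst_ultra x b q = subst_ultra x b q"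
      by (metis q(4) subst_ultra_umult p_subst)
    ultimately show ?thesis
      by (rule p_min[rule_format, OF subst_ultra_located_constant[OF q(1) b xB]])
  qed
  ultimately show ?thesis using q p(2) by blast
qed

theorem idempotent_pair_exists:
  assumes "x \<notin> B"
  shows "\<exists>p q. q \<in> located_ultras B x \<and> var_words x \<in> q \<and>
    q \<odot> q = q \<and> q \<odot> p = q \<and> p \<odot> q = q \<and> p \<odot> p = p \<and>
    (\<forall>b\<in>B. subst_ultra x b q = p) \<and> (\<forall>c. subst_ultra x c p = p)"
proof (cases "B = {}")
  case True
  let ?V = "located_ultras B x \<inter> {U. ultrafilter U \<and> var_words x \<in> U}"
  have closed: "ultra_closed ?V"
    by (rule ultra_closed_Int[OF ultra_closed_located_ultras ultra_closed_basic])
  have "mult_closed ?V"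
    unfolding mult_closed_def using located_var_ultras_ideal[of B x] by simp
  then obtain q where q: "q \<in> ?V" "q \<odot> q = q"
    by (rule Ellis_Numakura[OF closed located_var_ultras_nonempty])
  show ?thesis
    by (rule exI[of _ "principal_ultra []"], rule exI[of _ q])
      (use q True in \<open>auto simp: umult_principal_ultra_Nil_left umult_principal_ultra_Nil_right
         subst_ultra_principal_ultra_Nil\<close>)
next
  case False
  then obtain b0 where "b0 \<in> B" by blast
  then show ?thesis by (rule idempotent_pair_exists_nonempty[OF _ assms])
qed

section \<open>Construction of the sequence\<close>

lemma suffix_remdups_adj_append: "suffix (remdups_adj ys) (remdups_adj (xs @ ys))"
proof (cases ys)
  case (Cons y zs)
  have "remdups_adj (xs @ [y]) = butlast (remdups_adj (xs @ [y])) @ [y]"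
    by (metis last_remdups_adj last_snoc remdups_adj_Nil_iff snoc_eq_iff_butlast)
  then show ?thesis using Cons
    by (metis append.assoc append_Cons remdups_adj_Cons_alt remdups_adj_append suffix_def
        self_append_conv2)
qed (simp add: suffix_def)

lemma suffix_reduce_append: "suffix (reduce B ds) (reduce B (cs @ ds))"
  unfolding reduce_def by (simp add: suffix_remdups_adj_append)

lemma reduce_Cons: "reduce B (c # ds) =
  (if c \<in> B then reduce B ds else
    (case reduce B ds of [] \<Rightarrow> [c] | y # t \<Rightarrow> if c = y then y # t else c # y # t))"
  unfolding reduce_def by (simp add: remdups_adj_Cons)

lemma subst_prod_Nil: "subst_prod x f [] cs = []"
  unfolding subst_prod_def by simp

lemma subst_prod_snoc:
  "length ns = length cs \<Longrightarrow>
   subst_prod x f (ns @ [n]) (cs @ [c]) = subst_prod x f ns cs @ subst x (f n) c"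
  unfolding subst_prod_def by simp

lemma subst_prod_cong:
  "(\<And>i. i \<in> set ns \<Longrightarrow> f i = g i) \<Longrightarrow> subst_prod x f ns cs = subst_prod x g ns cs"
  unfolding subst_prod_def by (auto intro!: arg_cong[where f=concat] map_cong dest: set_zip_leftD)

lemma sorted_wrt_less_length_le: "sorted_wrt (<) ns \<Longrightarrow> set ns \<subseteq> {..<k} \<Longrightarrow> length ns \<le> k"
  by (metis card_lessThan card_mono distinct_card finite_lessThan strict_sorted_iff)

lemma sorted_wrt_less_snoc_max:
  assumes "sorted_wrt (<) ns" "set ns \<subseteq> {..<Suc k}" "k \<in> set ns"
  obtains ns0 where "ns = ns0 @ [k]" "sorted_wrt (<) ns0" "set ns0 \<subseteq> {..<k}"
proof -
  obtain ns0 l where ns: "ns = ns0 @ [l]"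
    using assms(3) by (metis rev_exhaust empty_iff list.set(1))
  then have "sorted_wrt (<) ns0" "\<forall>y\<in>set ns0. y < l" "l \<le> k"
    using assms(1,2) by (auto simp: sorted_wrt_append)
  moreover have "l = k" using assms(3) calculation(2,3) ns by fastforce
  ultimately show ?thesis using ns that by auto
qed

locale located_colouring =
  fixes A B :: "'a set" and x :: 'a and F :: "'a list set"
    and \<chi> :: "(nat \<times> 'a) list \<Rightarrow> nat" and r :: nat and p q :: "(nat \<times> 'a) list set set"
  assumes finite_A: "finite A" and finite_B: "finite B" and finite_F: "finite F"
    and colouring: "\<forall>v\<in>located_words (A \<union> B) x. \<chi> v < r"
    and pp: "p \<odot> p = p" and subst_p: "\<And>c. subst_ultra x c p = p"
    and q_located: "q \<in> located_ultras B x" and q_var: "var_words x \<in> q"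
    and qq: "q \<odot> q = q" and qp: "q \<odot> p = q" and pq: "p \<odot> q = q"
    and subst_q: "\<And>b. b \<in> B \<Longrightarrow> subst_ultra x b q = p"
begin

lemma ultrafilter_q: "ultrafilter q"
  using q_located unfolding located_ultras_def by blast

definition q_at :: "'a \<Rightarrow> (nat \<times> 'a) list set set" where
  "q_at c = subst_ultra x c q"

definition q_word :: "'a list \<Rightarrow> (nat \<times> 'a) list set set" where
  "q_word ds = foldr (\<lambda>c P. q_at c \<odot> P) ds (principal_ultra [])"

lemma q_word_simps [simp]: "q_word [] = principal_ultra []" "q_word (c # ds) = q_at c \<odot> q_word ds"
  unfolding q_word_def by simp_all

text \<open>The empty reduced string comes from letters in \<open>B\<close> only, whose product is \<open>p\<close>.\<close>
definition q_reduced :: "'a list \<Rightarrow> (nat \<times> 'a) list set set" where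
  "q_reduced t = (if t = [] then p else q_word t)"

lemma q_at_idem: "q_at c \<odot> q_at c = q_at c"
  unfolding q_at_def by (metis subst_ultra_umult qq)

lemma q_at_umult_p: "q_at c \<odot> p = q_at c"
  unfolding q_at_def by (metis subst_ultra_umult qp subst_p)

lemma p_umult_q_at: "p \<odot> q_at c = q_at c"
  unfolding q_at_def by (metis subst_ultra_umult pq subst_p)

lemma q_at_B: "c \<in> B \<Longrightarrow> q_at c = p"
  unfolding q_at_def using subst_q by blast

lemma p_umult_q_reduced: "p \<odot> q_reduced t = q_reduced t"
  by (cases t) (simp_all add: q_reduced_def pp umult_assoc[symmetric] p_umult_q_at)

text \<open>The heart of the argument: \<open>q[c\<^sub>1] \<odot> \<dots> \<odot> q[c\<^sub>k]\<close> only depends on the reduced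
  string of \<open>c\<^sub>1 \<dots> c\<^sub>k\<close>, as \<open>q[b] = p\<close> is absorbed for \<open>b \<in> B\<close> and \<open>q[a]\<close> is idempotent.\<close>
lemma q_word_eq_q_reduced: "ds \<noteq> [] \<Longrightarrow> q_word ds = q_reduced (reduce B ds)"
proof (induction ds)
  case (Cons c ds)
  show ?case
  proof (cases "ds = []")
    case True
    then show ?thesis
      by (cases "c \<in> B")
        (auto simp: q_reduced_def reduce_def umult_principal_ultra_Nil_right q_at_B)
  next
    case False
    then have IH: "q_word ds = q_reduced (reduce B ds)" using Cons.IH by blast
    show ?thesis
    proof (cases "c \<in> B")
      case True
      then show ?thesis using IH p_umult_q_reduced by (simp add: q_at_B reduce_Cons)
    next
      case False
      then show ?thesis using IH
        by (cases "reduce B ds")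
          (auto simp: reduce_Cons q_reduced_def q_at_umult_p umult_assoc[symmetric] q_at_idem
            umult_principal_ultra_Nil_right)
    qed
  qed
qed simp

lemma q_word_located: "ds \<noteq> [] \<Longrightarrow> set ds \<subseteq> A \<union> B \<Longrightarrow> q_word ds \<in> located_ultras (A \<union> B) x"
proof (induction ds)
  case (Cons c ds)
  have "q_at c \<in> located_ultras (A \<union> B) x"
    unfolding q_at_def using subst_ultra_located_ultras[OF q_located] Cons.prems by auto
  then show ?case
    using Cons mult_closedD[OF mult_closed_located_ultras]
    by (cases "ds = []") (auto simp: umult_principal_ultra_Nil_right)
qed simp

definition colour :: "'a list \<Rightarrow> nat" where
  "colour t = (SOME k. {v \<in> located_words (A \<union> B) x. \<chi> v = k} \<in> q_reduced t)"

definition colour_class :: "'a list \<Rightarrow> (nat \<times> 'a) list set" where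
  "colour_class t = {v \<in> located_words (A \<union> B) x. \<chi> v = colour t}"

lemma colour_class_in_q_word:
  assumes ds: "ds \<noteq> []" "set ds \<subseteq> A \<union> B"
  shows "colour_class (reduce B ds) \<in> q_word ds"
proof -
  have located: "q_word ds \<in> located_ultras (A \<union> B) x" using q_word_located[OF ds] .
  then have U: "ultrafilter (q_word ds)" unfolding located_ultras_def by blast
  have "located_words_above (A \<union> B) x 0 \<in> q_word ds"
    using located unfolding located_ultras_def by blast
  then have "located_words (A \<union> B) x \<in> q_word ds"
    using ultrafilter_mono[OF U] unfolding located_words_above_def by blast
  moreover have "located_words (A \<union> B) x =
      (\<Union>k\<in>{..<r}. {v \<in> located_words (A \<union> B) x. \<chi> v = k})"
    using colouring by blast
  ultimately have "(\<Union>k\<in>{..<r}. {v \<in> located_words (A \<union> B) x. \<chi> v = k}) \<in> q_word ds"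
    by simp
  then obtain k where "{v \<in> located_words (A \<union> B) x. \<chi> v = k} \<in> q_word ds"
    using ultrafilter_UN_finite[OF U finite_lessThan] by blast
  then have "{v \<in> located_words (A \<union> B) x. \<chi> v = k} \<in> q_reduced (reduce B ds)"
    using q_word_eq_q_reduced[OF ds(1)] by simp
  then have "colour_class (reduce B ds) \<in> q_reduced (reduce B ds)"
    unfolding colour_class_def colour_def by (rule someI)
  then show ?thesis using q_word_eq_q_reduced[OF ds(1)] by simp
qed

definition compatible :: "(nat \<times> 'a) list \<Rightarrow> 'a list \<Rightarrow> bool" where
  "compatible u cs \<longleftrightarrow>
     (\<forall>ds. ds \<noteq> [] \<and> set ds \<subseteq> A \<union> B \<and> reduce B (cs @ ds) \<in> F \<longrightarrow>
        {v. u @ v \<in> colour_class (reduce B (cs @ ds))} \<in> q_word ds) \<and>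
     (cs \<noteq> [] \<and> reduce B cs \<in> F \<longrightarrow> u \<in> colour_class (reduce B cs))"

lemma compatible_Nil: "compatible [] []"
  unfolding compatible_def using colour_class_in_q_word by simp

lemma compatible_continuations_in_q:
  assumes u: "compatible u cs" and c: "c \<in> A \<union> B"
  shows "{w. \<forall>ds. ds \<noteq> [] \<and> set ds \<subseteq> A \<union> B \<and> reduce B (cs @ c # ds) \<in> F \<longrightarrow>
     {v. u @ subst x w c @ v \<in> colour_class (reduce B (cs @ c # ds))} \<in> q_word ds} \<in> q"
    (is "?W \<in> q")
proof -
  \<comment> \<open>Only finitely many pairs \<open>(s, t)\<close> of a string in \<open>F\<close> and one of its suffixes occur as
    \<open>(reduce B (cs @ c # ds), reduce B ds)\<close>, and \<open>q_word ds\<close> only depends on the latter.\<close>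
  define E where "E s = {v. u @ v \<in> colour_class s}" for s
  define witnessed where "witnessed s t \<longleftrightarrow> s \<in> F \<and> (\<exists>ds. ds \<noteq> [] \<and> set ds \<subseteq> A \<union> B \<and>
      reduce B (cs @ c # ds) = s \<and> reduce B ds = t)" for s t
  define G where "G s t = (if witnessed s t then {w. subst x w c \<in> prefix_set (q_reduced t) (E s)}
      else UNIV)" for s t
  have G_in_q: "G s t \<in> q" for s t
  proof (cases "witnessed s t")
    case True
    then obtain ds where ds: "ds \<noteq> []" "set ds \<subseteq> A \<union> B" "reduce B (cs @ c # ds) = s"
      "reduce B ds = t" "s \<in> F" unfolding witnessed_def by blast
    then have "E s \<in> q_word (c # ds)"
      using u c unfolding compatible_def E_def by (metis Cons_eq_appendI insert_subset
          list.distinct(1) list.simps(15) self_append_conv2)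
    then have "E s \<in> q_at c \<odot> q_reduced t" using q_word_eq_q_reduced[OF ds(1)] ds(4) by simp
    then show ?thesis using True unfolding G_def mem_umult_iff q_at_def subst_ultra_def by simp
  qed (simp add: G_def ultrafilter_UNIV[OF ultrafilter_q])
  let ?I = "\<Union>s\<in>F. {s} \<times> set (suffixes s)"
  have "finite ?I" using finite_F by blast
  then have "(\<Inter>i\<in>?I. case_prod G i) \<in> q"
    by (rule ultrafilter_INT[OF ultrafilter_q]) (simp add: G_in_q split: prod.splits)
  moreover have "(\<Inter>i\<in>?I. case_prod G i) \<subseteq> ?W"
  proof (intro subsetI CollectI allI impI)
    fix w ds assume w: "w \<in> (\<Inter>i\<in>?I. case_prod G i)"
      and ds: "ds \<noteq> [] \<and> set ds \<subseteq> A \<union> B \<and> reduce B (cs @ c # ds) \<in> F"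
    let ?s = "reduce B (cs @ c # ds)" and ?t = "reduce B ds"
    have "witnessed ?s ?t" unfolding witnessed_def using ds by blast
    moreover have "(?s, ?t) \<in> ?I"
      using ds suffix_reduce_append[of B ds "cs @ [c]"] by auto
    ultimately have "subst x w c \<in> prefix_set (q_reduced ?t) (E ?s)"
      using w unfolding G_def by fastforce
    then show "{v. u @ subst x w c @ v \<in> colour_class ?s} \<in> q_word ds"
      unfolding prefix_set_def E_def using q_word_eq_q_reduced ds by simp
  qed
  ultimately show ?thesis using ultrafilter_mono[OF ultrafilter_q] by blast
qed

lemma compatible_extension_in_q:
  assumes u: "compatible u cs" and c: "c \<in> A \<union> B"
  shows "{w. compatible (u @ subst x w c) (cs @ [c])} \<in> q"
proof -
  let ?s = "reduce B (cs @ [c])"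
  have "{w. ?s \<in> F \<longrightarrow> u @ subst x w c \<in> colour_class ?s} \<in> q"
  proof (cases "?s \<in> F")
    case True
    then have "{v. u @ v \<in> colour_class ?s} \<in> q_word [c]"
      using u c unfolding compatible_def by (metis empty_subsetI insert_subset list.distinct(1)
          list.set(1) list.simps(15))
    then show ?thesis
      using True by (simp add: umult_principal_ultra_Nil_right q_at_def subst_ultra_def)
  qed (simp add: ultrafilter_UNIV[OF ultrafilter_q])
  with compatible_continuations_in_q[OF u c]
  have "{w. \<forall>ds. ds \<noteq> [] \<and> set ds \<subseteq> A \<union> B \<and> reduce B (cs @ c # ds) \<in> F \<longrightarrow>
      {v. u @ subst x w c @ v \<in> colour_class (reduce B (cs @ c # ds))} \<in> q_word ds} \<inter>
    {w. ?s \<in> F \<longrightarrow> u @ subst x w c \<in> colour_class ?s} \<in> q"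
    by (rule ultrafilter_Int[OF ultrafilter_q])
  then show ?thesis
    by (rule ultrafilter_mono[OF ultrafilter_q]) (auto simp: compatible_def)
qed

definition admissible :: "nat \<Rightarrow> (nat \<Rightarrow> (nat \<times> 'a) list) \<Rightarrow> bool" where
  "admissible k f \<longleftrightarrow>
     (\<forall>i<k. f i \<in> located_words B x \<and> occurs x (f i)) \<and>
     (\<forall>i j. i < j \<longrightarrow> j < k \<longrightarrow> (\<forall>a\<in>set (f i). \<forall>b\<in>set (f j). fst a < fst b)) \<and>
     (\<forall>ns cs. sorted_wrt (<) ns \<and> set ns \<subseteq> {..<k} \<and> length cs = length ns \<and> set cs \<subseteq> A \<union> B
        \<longrightarrow> compatible (subst_prod x f ns cs) cs)"

lemma admissible_0: "admissible 0 f"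
  unfolding admissible_def by (auto simp: subst_prod_Nil compatible_Nil)

lemma admissible_cong: "admissible k f \<Longrightarrow> (\<And>i. i < k \<Longrightarrow> f i = g i) \<Longrightarrow> admissible k g"
  unfolding admissible_def
  by (smt (verit, best) lessThan_iff order.strict_trans subsetD subst_prod_cong)

lemma admissible_extension_candidates_in_q:
  assumes f: "admissible k f"
  shows "{w. \<forall>ns cs c. sorted_wrt (<) ns \<and> set ns \<subseteq> {..<k} \<and> length cs = length ns \<and>
      set cs \<subseteq> A \<union> B \<and> c \<in> A \<union> B \<longrightarrow>
      compatible (subst_prod x f ns cs @ subst x w c) (cs @ [c])} \<in> q"
proof -
  define W where "W = (\<lambda>(ns, cs, c). {w. sorted_wrt (<) ns \<and> length cs = length ns \<longrightarrow>
      compatible (subst_prod x f ns cs @ subst x w c) (cs @ [c])})"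
  let ?I = "{ns. set ns \<subseteq> {..<k} \<and> length ns \<le> k} \<times> {cs. set cs \<subseteq> A \<union> B \<and> length cs \<le> k}
    \<times> (A \<union> B)"
  have "finite ?I"
    using finite_lists_length_le[of "{..<k}" k] finite_lists_length_le[of "A \<union> B" k]
      finite_A finite_B by simp
  moreover have "W i \<in> q" if "i \<in> ?I" for i
  proof -
    obtain ns cs c where i: "i = (ns, cs, c)" by (cases i)
    show ?thesis
    proof (cases "sorted_wrt (<) ns \<and> length cs = length ns")
      case True
      then have "compatible (subst_prod x f ns cs) cs"
        using f that unfolding admissible_def i by simp
      then show ?thesis
        using compatible_extension_in_q that True unfolding W_def i by simp
    next
      case False
      then have "W i = UNIV" unfolding W_def i by auto
      then show ?thesis using ultrafilter_UNIV[OF ultrafilter_q] by simp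
    qed
  qed
  ultimately have "(\<Inter>i\<in>?I. W i) \<in> q" by (rule ultrafilter_INT[OF ultrafilter_q])
  then show ?thesis
  proof (rule ultrafilter_mono[OF ultrafilter_q], intro subsetI CollectI allI impI)
    fix w ns cs c assume w: "w \<in> (\<Inter>i\<in>?I. W i)"
      and h: "sorted_wrt (<) ns \<and> set ns \<subseteq> {..<k} \<and> length cs = length ns \<and>
        set cs \<subseteq> A \<union> B \<and> c \<in> A \<union> B"
    then have "(ns, cs, c) \<in> ?I" using sorted_wrt_less_length_le[of ns k] by auto
    then show "compatible (subst_prod x f ns cs @ subst x w c) (cs @ [c])"
      using w h unfolding W_def by auto
  qed
qed

lemma admissible_fun_upd:
  assumes f: "admissible k f" and w: "w \<in> located_words B x" "occurs x w"
    and after: "\<And>i a b. i < k \<Longrightarrow> a \<in> set (f i) \<Longrightarrow> b \<in> set w \<Longrightarrow> fst a < fst b"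
    and extend: "\<And>ns cs c. sorted_wrt (<) ns \<Longrightarrow> set ns \<subseteq> {..<k} \<Longrightarrow> length cs = length ns \<Longrightarrow>
        set cs \<subseteq> A \<union> B \<Longrightarrow> c \<in> A \<union> B \<Longrightarrow>
        compatible (subst_prod x f ns cs @ subst x w c) (cs @ [c])"
  shows "admissible (Suc k) (f(k := w))"
  unfolding admissible_def
proof (intro conjI allI impI)
  have old: "subst_prod x (f(k := w)) ns cs = subst_prod x f ns cs" if "set ns \<subseteq> {..<k}" for ns cs
    by (rule subst_prod_cong) (use that in auto)
  fix ns cs
  assume ns: "sorted_wrt (<) ns \<and> set ns \<subseteq> {..<Suc k} \<and> length cs = length ns \<and> set cs \<subseteq> A \<union> B"
  show "compatible (subst_prod x (f(k := w)) ns cs) cs"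
  proof (cases "k \<in> set ns")
    case True
    then obtain ns0 where ns0: "ns = ns0 @ [k]" "sorted_wrt (<) ns0" "set ns0 \<subseteq> {..<k}"
      using sorted_wrt_less_snoc_max ns by blast
    then obtain cs0 c where cs0: "cs = cs0 @ [c]" "length cs0 = length ns0"
      using ns by (metis append_butlast_last_id length_butlast length_append_singleton
          diff_Suc_1 list.size(3) nat.distinct(1))
    show ?thesis
      using extend[OF ns0(2,3) cs0(2)] ns subst_prod_snoc[OF cs0(2)[symmetric]] old[OF ns0(3)]
      unfolding ns0(1) cs0(1) by simp
  next
    case False
    then have "set ns \<subseteq> {..<k}" using ns by (auto simp: less_Suc_eq)
    then show ?thesis using f ns old unfolding admissible_def by simp
  qed
next
  fix i j assume ij: "i < j" "j < Suc k"
  then show "\<forall>a\<in>set ((f(k := w)) i). \<forall>b\<in>set ((f(k := w)) j). fst a < fst b"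
    using f after unfolding admissible_def by (cases "j = k") auto
qed (use f w in \<open>auto simp: admissible_def less_Suc_eq\<close>)

lemma admissible_extend:
  assumes f: "admissible k f"
  shows "\<exists>w. admissible (Suc k) (f(k := w))"
proof -
  define N where "N = Max (insert 0 (fst ` (\<Union>i<k. set (f i))))"
  have N: "fst a \<le> N" if "i < k" "a \<in> set (f i)" for i a
    unfolding N_def using that by (intro Max_ge) auto
  have "located_words_above B x N \<in> q" using q_located unfolding located_ultras_def by blast
  then have "located_words_above B x N \<inter> var_words x \<inter>
      {w. \<forall>ns cs c. sorted_wrt (<) ns \<and> set ns \<subseteq> {..<k} \<and> length cs = length ns \<and>
        set cs \<subseteq> A \<union> B \<and> c \<in> A \<union> B \<longrightarrow>
        compatible (subst_prod x f ns cs @ subst x w c) (cs @ [c])} \<in> q" (is "?S \<in> q")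
    using q_var admissible_extension_candidates_in_q[OF f] ultrafilter_Int[OF ultrafilter_q] by simp
  then have "?S \<noteq> {}" by (metis ultrafilter_empty[OF ultrafilter_q])
  then obtain w where "w \<in> ?S" by blast
  then have w: "w \<in> located_words_above B x N" "occurs x w"
    and extend: "\<And>ns cs c. sorted_wrt (<) ns \<Longrightarrow> set ns \<subseteq> {..<k} \<Longrightarrow> length cs = length ns \<Longrightarrow>
        set cs \<subseteq> A \<union> B \<Longrightarrow> c \<in> A \<union> B \<Longrightarrow>
        compatible (subst_prod x f ns cs @ subst x w c) (cs @ [c])"
    unfolding var_words_def by auto
  have "fst a < fst b" if "i < k" "a \<in> set (f i)" "b \<in> set w" for i a b
    using N[OF that(1,2)] w(1) that(3) unfolding located_words_above_def by fastforce
  then have "admissible (Suc k) (f(k := w))"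
    using admissible_fun_upd[OF f _ w(2) _ extend] w(1) unfolding located_words_above_def by blast
  then show ?thesis by blast
qed
primrec prefix_seq :: "nat \<Rightarrow> nat \<Rightarrow> (nat \<times> 'a) list" where
  "prefix_seq 0 = (\<lambda>_. [])"
| "prefix_seq (Suc k) =
    (prefix_seq k)(k := SOME w. admissible (Suc k) ((prefix_seq k)(k := w)))"

definition word_seq :: "nat \<Rightarrow> (nat \<times> 'a) list" where
  "word_seq i = prefix_seq (Suc i) i"

lemma admissible_prefix_seq: "admissible k (prefix_seq k)"
proof (induction k)
  case (Suc k)
  then show ?case unfolding prefix_seq.simps by (rule someI_ex[OF admissible_extend])
qed (simp add: admissible_0)

lemma prefix_seq_eq_word_seq: "i < k \<Longrightarrow> prefix_seq k i = word_seq i"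
  by (induction k) (auto simp: word_seq_def less_Suc_eq)

lemma admissible_word_seq: "admissible k word_seq"
  using admissible_cong[OF admissible_prefix_seq prefix_seq_eq_word_seq] .

lemma word_seq_colour:
  assumes "ns \<noteq> []" "sorted_wrt (<) ns" "length cs = length ns" "set cs \<subseteq> A \<union> B"
    and "reduce B cs \<in> F"
  shows "subst_prod x word_seq ns cs \<in> colour_class (reduce B cs)"
proof -
  have "set ns \<subseteq> {..<Suc (Max (set ns))}" by (auto simp: less_Suc_eq_le)
  then have "compatible (subst_prod x word_seq ns cs) cs"
    using admissible_word_seq assms unfolding admissible_def by blast
  then show ?thesis using assms unfolding compatible_def by auto
qed

theorem word_seq_properties:
  "basic_seq B x word_seq \<and> (\<forall>i. occurs x (word_seq i)) \<and>
    (\<forall>ns cs ns' cs'.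
        ns \<noteq> [] \<and> sorted_wrt (<) ns \<and> length cs = length ns \<and> set cs \<subseteq> A \<union> B \<and>
        ns' \<noteq> [] \<and> sorted_wrt (<) ns' \<and> length cs' = length ns' \<and> set cs' \<subseteq> A \<union> B \<and>
        reduce B cs \<in> F \<and> reduce B cs' = reduce B cs
        \<longrightarrow> \<chi> (subst_prod x word_seq ns cs) = \<chi> (subst_prod x word_seq ns' cs'))"
proof (intro conjI allI impI)
  show "basic_seq B x word_seq"
  proof (rule basic_seqI)
    show "word_seq i \<in> located_words B x" for i
      using admissible_word_seq[of "Suc i"] unfolding admissible_def by simp
    show "fst a < fst b" if "i < j" "a \<in> set (word_seq i)" "b \<in> set (word_seq j)" for i j a b
      using admissible_word_seq[of "Suc j"] that unfolding admissible_def by blast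
  qed
  show "occurs x (word_seq i)" for i
    using admissible_word_seq[of "Suc i"] unfolding admissible_def by simp
next
  fix ns ns' :: "nat list" and cs cs'
  assume "ns \<noteq> [] \<and> sorted_wrt (<) ns \<and> length cs = length ns \<and> set cs \<subseteq> A \<union> B \<and>
    ns' \<noteq> [] \<and> sorted_wrt (<) ns' \<and> length cs' = length ns' \<and> set cs' \<subseteq> A \<union> B \<and>
    reduce B cs \<in> F \<and> reduce B cs' = reduce B cs"
  then show "\<chi> (subst_prod x word_seq ns cs) = \<chi> (subst_prod x word_seq ns' cs')"
    using word_seq_colour[of ns cs] word_seq_colour[of ns' cs'] unfolding colour_class_def by simp
qed

end

theorem mainTheorem20:
  fixes A B :: "'a set" and x :: 'a and F :: "'a list set"
    and \<chi> :: "(nat \<times> 'a) list \<Rightarrow> nat" and r :: nat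
  assumes "finite A" and "finite B" and "A \<inter> B = {}" and "x \<notin> A \<union> B"
    and "finite F" and "\<forall>s\<in>F. reduced_string A s"
    and "\<forall>v\<in>located_words (A \<union> B) x. \<chi> v < r"
  shows "\<exists>w. basic_seq B x w \<and> (\<forall>i. occurs x (w i)) \<and>
    (\<forall>ns cs ns' cs'.
        ns \<noteq> [] \<and> sorted_wrt (<) ns \<and> length cs = length ns \<and> set cs \<subseteq> A \<union> B \<and>
        ns' \<noteq> [] \<and> sorted_wrt (<) ns' \<and> length cs' = length ns' \<and> set cs' \<subseteq> A \<union> B \<and>
        reduce B cs \<in> F \<and> reduce B cs' = reduce B cs
        \<longrightarrow> \<chi> (subst_prod x w ns cs) = \<chi> (subst_prod x w ns' cs'))"
proof -
  obtain p q where "q \<in> located_ultras B x" "var_words x \<in> q"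
    "q \<odot> q = q" "q \<odot> p = q" "p \<odot> q = q" "p \<odot> p = p"
    "\<forall>b\<in>B. subst_ultra x b q = p" "\<forall>c. subst_ultra x c p = p"
    using idempotent_pair_exists[of x B] \<open>x \<notin> A \<union> B\<close> by blast
  then interpret located_colouring A B x F \<chi> r p q
    using assms by unfold_locales auto
  show ?thesis using word_seq_properties by blast
qed

end
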